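(* In the line network model (see context) with any erasure probabilities $p_1,\dots,p_\ell\in[0,1)$, let $T^{(1)}_n:=\sigma_n=\min\{t:\rho_2(t)=n\}$ be the time for all $n$ packets to cross the first link and $\tau_n:=T_n-T^{(1)}_n$ the additional time for the remaining innovative packets at nodes $N^{(2)},\dots,N^{(\ell)}$ to reach the destination. Then $\mathbb{E}T^{(1)}_n=\frac{n}{1-p_1}$ and $\mathbb{E}\tau_n\le\mathbb{E}\tau_{n+1}$ for all $n\ge1$ (where $\tau_{n+1}$ refers to the same model with $n+1$ source packets).
   Context: Line network model. Fix integers $\ell\ge1$, $n\ge1$ and erasure probabilities $p_1,\dots,p_\ell\in[0,1)$. Let $\{z_{t,i}\}$ be independent Bernoulli variables with $\mathbb{P}(z_{t,i}=1)=1-p_i$. The rank $\rho_i(t)$ of node $N^{(i)}$ after $t$ steps satisfies $\rho_1(t)=n$, $\rho_i(0)=0$ for $i\ge2$, and $\rho_{i+1}(t)=\rho_{i+1}(t-1)+z_{t,i}\mathbf 1\{\rho_i(t-1)>\rho_{i+1}(t-1)\}$ for $t\ge1$, $1\le i\le\ell$. The completion time is $T_n:=\min\{t\ge0:\rho_{\ell+1}(t)=n\}$. *)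

theory Defs
  imports "HOL-Probability.Probability"
begin

text \<open>Rank of node i (i = 1..l+1) after t steps, with n source packets and
  erasure indicators z t i (z t i = True means link i succeeds at step t).\<close>
primrec rho :: "nat \<Rightarrow> (nat \<Rightarrow> nat \<Rightarrow> bool) \<Rightarrow> nat \<Rightarrow> nat \<Rightarrow> nat" where
  "rho n z 0 i = (if i = 1 then n else 0)"
| "rho n z (Suc t) i =
     (if i \<le> 1 then n
      else rho n z t i +
           (if z (Suc t) (i - 1) \<and> rho n z t (i - 1) > rho n z t i then 1 else 0))"

definition hit :: "(nat \<Rightarrow> bool) \<Rightarrow> ennreal" where
  "hit P = (if \<exists>t. P t then of_nat (LEAST t. P t) else \<infinity>)"

definition completion_time :: "nat \<Rightarrow> nat \<Rightarrow> (nat \<Rightarrow> nat \<Rightarrow> bool) \<Rightarrow> ennreal" where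
  "completion_time l n z = hit (\<lambda>t. rho n z t (l + 1) = n)"

definition first_link_time :: "nat \<Rightarrow> (nat \<Rightarrow> nat \<Rightarrow> bool) \<Rightarrow> ennreal" where
  "first_link_time n z = hit (\<lambda>t. rho n z t 2 = n)"

definition erasure_space :: "(nat \<Rightarrow> real) \<Rightarrow> ((nat \<times> nat) \<Rightarrow> bool) measure" where
  "erasure_space p = PiM UNIV (\<lambda>(t, i). measure_pmf (bernoulli_pmf (1 - p i)))"

end

theory Submission
  imports Defs
begin

(* Write sigma_n for the time all n packets have crossed link 1 and tau_n = T_n - sigma_n.
   Both claims come from restarting the network at the first time s at which link 1
   delivers a packet.

   (1) Deterministic part.  Node 2 holds min n (number of link-1 successes), so
       sigma_(m+1) = s + sigma_m(erasures after s).  A coupling shows that, from time s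
       on, the (n+1)-packet network dominates the n-packet network driven by the shifted
       erasures, with at most one packet of difference at each node; hence
       s + T_n(shifted) <= T_(n+1) and therefore tau_n(shifted) <= tau_(n+1).
   (2) Probabilistic part.  The erasure space splits into the pattern of the first time
       step and an independent copy of itself.  First-step analysis then gives the strong
       Markov property at s: E[g(erasures after s)] = E[g] for every measurable g >= 0.
   (3) E sigma_1 = 1/(1-p_1) by the tail-sum formula P(sigma_1 > k) = p_1^k, so
       E sigma_n = n/(1-p_1) by induction, and E tau_n <= E tau_(n+1) follows from (1)
       and (2). *)

(* Number of packets carried by link 1 during steps 1, ..., t: this is the rank node 2
   would have with unboundedly many source packets. *)
fun successes :: "(nat \<Rightarrow> nat \<Rightarrow> bool) \<Rightarrow> nat \<Rightarrow> nat" where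
  "successes z 0 = 0"
| "successes z (Suc t) = successes z t + (if z (Suc t) 1 then 1 else 0)"

lemma rho_source [simp]: "rho n z t 1 = n" "rho n z t (Suc 0) = n"
  by (cases t; simp)+

lemma rho_mono_time: "rho n z t i \<le> rho n z (Suc t) i"
  by (cases t; cases i) auto

lemma rho_le_predecessor: "2 \<le> i \<Longrightarrow> rho n z t i \<le> rho n z t (i - 1)"
proof (induction t)
  case 0
  then show ?case by simp
next
  case (Suc t)
  then have "rho n z (Suc t) i \<le> rho n z t (i - 1)" by auto
  also have "\<dots> \<le> rho n z (Suc t) (i - 1)" by (rule rho_mono_time)
  finally show ?case .
qed

lemma rho_le_second: "2 \<le> i \<Longrightarrow> rho n z t i \<le> rho n z t 2"
proof (induction i rule: dec_induct)
  case (step k)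
  then show ?case using rho_le_predecessor[of "Suc k" n z t] by simp
qed simp

(* Node 2 has received min n (successes z t) packets; this turns the first-link time into
   a counting problem. *)
lemma rho_second: "rho n z t 2 = min n (successes z t)"
  by (induction t) (auto simp: min_def)

lemma rho_le_packets: "1 \<le> i \<Longrightarrow> rho n z t i \<le> n"
  using rho_le_second[of i n z t] by (cases "i = 1") (auto simp: rho_second)

(* The erasure pattern seen from time k on.  The entry at time 0 is never read by the
   recursion; it is kept so that shifting exactly undoes the insertion of a time step. *)
definition shift_time :: "nat \<Rightarrow> (nat \<Rightarrow> nat \<Rightarrow> bool) \<Rightarrow> nat \<Rightarrow> nat \<Rightarrow> bool" where
  "shift_time k z = (\<lambda>t. if t = 0 then z 0 else z (t + k))"

lemma successes_shift_time: "successes z (s + t) = successes z s + successes (shift_time s z) t"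
  by (induction t) (auto simp: shift_time_def add.commute)

definition first_success :: "(nat \<Rightarrow> nat \<Rightarrow> bool) \<Rightarrow> nat" where
  "first_success z = (LEAST t. 1 \<le> successes z t)"

lemma first_success_successes:
  assumes "\<exists>t. 1 \<le> successes z t"
  shows "successes z (first_success z) = 1" and "\<And>t. t < first_success z \<Longrightarrow> successes z t = 0"
proof -
  have at: "1 \<le> successes z (first_success z)"
    unfolding first_success_def using assms by (rule LeastI_ex)
  show before: "successes z t = 0" if "t < first_success z" for t
    using not_less_Least[of t "\<lambda>t. 1 \<le> successes z t"] that by (simp add: first_success_def)
  obtain s where s: "first_success z = Suc s"
    using at by (cases "first_success z") auto
  show "successes z (first_success z) = 1"
    using at before[of s] s by (simp split: if_splits)
qed

lemma hit_shift:
  assumes "\<And>t. t < s \<Longrightarrow> \<not> P t"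
  shows "hit P = of_nat s + hit (\<lambda>u. P (s + u))"
proof (cases "\<exists>t. P t")
  case True
  then obtain t where "P t" by blast
  with assms have ex: "\<exists>u. P (s + u)" by (metis le_add_diff_inverse not_le)
  have "(LEAST t. P t) = s + (LEAST u. P (s + u))"
  proof (rule Least_equality)
    show "P (s + (LEAST u. P (s + u)))" using ex by (rule LeastI_ex)
  next
    fix y assume "P y"
    with assms have "s \<le> y" by (meson not_le)
    with \<open>P y\<close> have "(LEAST u. P (s + u)) \<le> y - s" by (intro Least_le) simp
    with \<open>s \<le> y\<close> show "s + (LEAST u. P (s + u)) \<le> y" by simp
  qed
  then show ?thesis using True ex by (simp add: hit_def)
qed (simp add: hit_def)

lemma hit_mono:
  assumes "\<And>t. P t \<Longrightarrow> Q t"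
  shows "hit Q \<le> hit P"
proof (cases "\<exists>t. P t")
  case True
  then have "(LEAST t. Q t) \<le> (LEAST t. P t)"
    by (meson LeastI_ex Least_le assms)
  then show ?thesis using True assms by (auto simp: hit_def)
qed (simp add: hit_def)

lemma hit_tail_sum:
  assumes mono: "\<And>t. P t \<Longrightarrow> P (Suc t)"
  shows "hit P = (\<Sum>k. if P k then 0 else 1)"
proof (cases "\<exists>t. P t")
  case True
  define m where "m = (LEAST t. P t)"
  have P_iff: "P k \<longleftrightarrow> m \<le> k" for k
  proof
    assume "m \<le> k"
    moreover have "P m" unfolding m_def using True by (rule LeastI_ex)
    ultimately show "P k" by (induction k rule: dec_induct) (use mono in auto)
  qed (simp add: m_def Least_le)
  have "(\<Sum>k. if P k then 0 else 1 :: ennreal) = (\<Sum>k<m. if P k then 0 else 1)"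
    by (rule suminf_finite) (auto simp: P_iff)
  also have "\<dots> = of_nat m" by (simp add: P_iff)
  finally show ?thesis using True by (simp add: hit_def m_def)
next
  case False
  have "(\<Sum>k::nat. 1::ennreal) = \<infinity>"
    using summable_iff_suminf_neq_top[of "\<lambda>_. 1::real"] by (simp add: summable_const_iff)
  then show ?thesis using False by (simp add: hit_def)
qed

lemma first_link_time_successes: "first_link_time n z = hit (\<lambda>t. n \<le> successes z t)"
  unfolding first_link_time_def rho_second by (metis min.absorb_iff1 min_def)

lemma first_link_time_restart:
  assumes "\<exists>t. 1 \<le> successes z t"
  defines "s \<equiv> first_success z"
  shows "first_link_time (Suc m) z = of_nat s + first_link_time m (shift_time s z)"
proof -
  note s = first_success_successes[OF assms(1), folded s_def]
  have "first_link_time (Suc m) z = of_nat s + hit (\<lambda>u. Suc m \<le> successes z (s + u))"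
    unfolding first_link_time_successes by (rule hit_shift) (simp add: s)
  also have "(\<lambda>u. Suc m \<le> successes z (s + u)) = (\<lambda>u. m \<le> successes (shift_time s z) u)"
    by (simp add: successes_shift_time s)
  finally show ?thesis by (simp add: first_link_time_successes)
qed

lemma rho_coupling:
  assumes "successes z s = 1" and "1 \<le> i"
  shows "rho (Suc n) z (s + u) i \<le> rho n (shift_time s z) u i + 1"
  using assms(2)
proof (induction u arbitrary: i)
  case 0
  show ?case
  proof (cases "i = 1")
    case False
    with 0 have "rho (Suc n) z s i \<le> rho (Suc n) z s 2" by (intro rho_le_second) auto
    with assms(1) show ?thesis by (simp add: rho_second)
  qed simp
next
  case (Suc u)
  show ?case
  proof (cases "i = 1")
    case False
    with Suc.prems obtain j where j: "i = Suc j" "1 \<le> j" by (cases i) auto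
    (* Both networks see the same erasure on link j; the update "advance if the link works
       and the predecessor is ahead" preserves a lead of at most one packet. *)
    have "shift_time s z (Suc u) j = z (Suc (s + u)) j" by (simp add: shift_time_def add.commute)
    moreover have "rho (Suc n) z (s + u) i \<le> rho n (shift_time s z) u i + 1"
      and "rho (Suc n) z (s + u) j \<le> rho n (shift_time s z) u j + 1"
      using Suc.IH j by auto
    ultimately show ?thesis using j by auto
  qed simp
qed

lemma completion_time_restart:
  assumes "1 \<le> l" and "\<exists>t. 1 \<le> successes z t"
  defines "s \<equiv> first_success z"
  shows "of_nat s + completion_time l n (shift_time s z) \<le> completion_time l (Suc n) z"
proof -
  note s = first_success_successes[OF assms(2), folded s_def]
  have "rho (Suc n) z t (l + 1) = 0" if "t < s" for t
    using rho_le_second[of "l + 1" "Suc n" z t] assms(1) s(2)[OF that] by (simp add: rho_second)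
  then have "completion_time l (Suc n) z = of_nat s + hit (\<lambda>u. rho (Suc n) z (s + u) (l + 1) = Suc n)"
    unfolding completion_time_def by (intro hit_shift) simp
  also have "completion_time l n (shift_time s z) \<le> hit (\<lambda>u. rho (Suc n) z (s + u) (l + 1) = Suc n)"
    unfolding completion_time_def
  proof (rule hit_mono)
    fix u assume "rho (Suc n) z (s + u) (l + 1) = Suc n"
    moreover have "rho (Suc n) z (s + u) (l + 1) \<le> rho n (shift_time s z) u (l + 1) + 1"
      using rho_coupling[OF s(1)] by simp
    moreover have "rho n (shift_time s z) u (l + 1) \<le> n" by (simp add: rho_le_packets)
    ultimately show "rho n (shift_time s z) u (l + 1) = n" by simp
  qed
  then have "of_nat s + completion_time l n (shift_time s z) \<le> of_nat s + \<dots>"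
    by (rule add_left_mono)
  finally show ?thesis .
qed

lemma delay_restart:
  assumes "1 \<le> l" and "\<exists>t. 1 \<le> successes z t"
  defines "s \<equiv> first_success z"
  shows "completion_time l n (shift_time s z) - first_link_time n (shift_time s z)
    \<le> completion_time l (Suc n) z - first_link_time (Suc n) z"
proof -
  have "completion_time l n (shift_time s z) - first_link_time n (shift_time s z)
      = (of_nat s + completion_time l n (shift_time s z)) - (of_nat s + first_link_time n (shift_time s z))"
    by (simp add: diff_add_eq_diff_diff_swap_ennreal)
  also have "\<dots> \<le> completion_time l (Suc n) z - first_link_time (Suc n) z"
    using completion_time_restart[OF assms(1,2)] first_link_time_restart[OF assms(2)]
    by (simp add: s_def ennreal_minus_mono)
  finally show ?thesis .
qed

lemma measurable_PiM_glue:
  fixes M :: "'i \<Rightarrow> 'a measure" and a :: "'j \<Rightarrow> 'i" and b :: "'k \<Rightarrow> 'i"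
  assumes cover: "\<And>i. i \<in> range a \<union> range b"
    and glue_a: "\<And>x y j. glue (x, y) (a j) = x j"
    and glue_b: "\<And>x y k. glue (x, y) (b k) = y k"
  shows "glue \<in> measurable (PiM UNIV (\<lambda>j. M (a j)) \<Otimes>\<^sub>M PiM UNIV (\<lambda>k. M (b k))) (PiM UNIV M)"
proof -
  let ?N = "PiM UNIV (\<lambda>j. M (a j)) \<Otimes>\<^sub>M PiM UNIV (\<lambda>k. M (b k))"
  have component: "(\<lambda>xy. glue xy i) \<in> measurable ?N (M i)" for i
  proof -
    from cover consider j where "i = a j" | k where "i = b k" by blast
    then show ?thesis
    proof cases
      case 1
      then have "(\<lambda>xy. glue xy i) = (\<lambda>xy. fst xy j)" by (auto simp: glue_a)
      then show ?thesis using \<open>i = a j\<close> by simp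
    next
      case 2
      then have "(\<lambda>xy. glue xy i) = (\<lambda>xy. snd xy k)" by (auto simp: glue_b)
      then show ?thesis using \<open>i = b k\<close> by simp
    qed
  qed
  have "(\<lambda>xy i. glue xy i) \<in> measurable ?N (PiM UNIV M)"
    by (rule measurable_PiM_single'[OF component]) (auto intro: measurable_space[OF component])
  then show ?thesis by simp
qed

lemma distr_PiM_glue:
  fixes M :: "'i \<Rightarrow> 'a measure" and a :: "'j \<Rightarrow> 'i" and b :: "'k \<Rightarrow> 'i"
  assumes M: "\<And>i. prob_space (M i)"
    and inj: "inj a" "inj b" and ranges_disjoint: "\<And>j k. a j \<noteq> b k"
    and cover: "\<And>i. i \<in> range a \<union> range b"
    and glue_a: "\<And>x y j. glue (x, y) (a j) = x j"
    and glue_b: "\<And>x y k. glue (x, y) (b k) = y k"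
  shows "distr (PiM UNIV (\<lambda>j. M (a j)) \<Otimes>\<^sub>M PiM UNIV (\<lambda>k. M (b k))) (PiM UNIV M) glue = PiM UNIV M"
proof (rule measure_eqI_PiM_infinite[symmetric, OF refl])
  (* It suffices to compare both measures on finite cylinders; the preimage of a cylinder
     under glue is a product of cylinders in the two factors. *)
  let ?A = "PiM UNIV (\<lambda>j. M (a j))" and ?B = "PiM UNIV (\<lambda>k. M (b k))"
  have meas: "glue \<in> measurable (?A \<Otimes>\<^sub>M ?B) (PiM UNIV M)"
    using cover glue_a glue_b by (rule measurable_PiM_glue)
  interpret B: prob_space ?B using M by (intro prob_space_PiM) auto
  show "finite_measure (PiM UNIV M)"
    using M by (intro prob_space.finite_measure prob_space_PiM) auto
  show "sets (distr (?A \<Otimes>\<^sub>M ?B) (PiM UNIV M) glue) = sets (PiM UNIV M)" by simp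
  fix J :: "'i set" and X assume J: "finite J" "J \<subseteq> UNIV"
    and X: "\<And>i. i \<in> J \<Longrightarrow> X i \<in> sets (M i)"
  let ?Ja = "a -` J" and ?Jb = "b -` J"
  have fin: "finite ?Ja" "finite ?Jb"
    using J inj by (auto intro: finite_vimageI)
  have preimage: "glue -` prod_emb UNIV M J (PiE J X) \<inter> space (?A \<Otimes>\<^sub>M ?B) =
      prod_emb UNIV (\<lambda>j. M (a j)) ?Ja (PiE ?Ja (\<lambda>j. X (a j)))
        \<times> prod_emb UNIV (\<lambda>k. M (b k)) ?Jb (PiE ?Jb (\<lambda>k. X (b k)))"
    using cover by (auto simp: prod_emb_def space_pair_measure space_PiM PiE_iff)
      (metis glue_a glue_b rangeE vimageI)+
  have "emeasure (distr (?A \<Otimes>\<^sub>M ?B) (PiM UNIV M) glue) (prod_emb UNIV M J (PiE J X))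
      = emeasure ?A (prod_emb UNIV (\<lambda>j. M (a j)) ?Ja (PiE ?Ja (\<lambda>j. X (a j))))
        * emeasure ?B (prod_emb UNIV (\<lambda>k. M (b k)) ?Jb (PiE ?Jb (\<lambda>k. X (b k))))"
    using J X meas fin
    by (simp add: emeasure_distr sets_PiM_I preimage B.emeasure_pair_measure_Times)
  also have "\<dots> = (\<Prod>j\<in>?Ja. emeasure (M (a j)) (X (a j))) * (\<Prod>k\<in>?Jb. emeasure (M (b k)) (X (b k)))"
    using X fin by (subst (1 2) emeasure_PiM_emb) (auto simp: M)
  also have "\<dots> = (\<Prod>i\<in>J \<inter> range a. emeasure (M i) (X i)) * (\<Prod>i\<in>J \<inter> range b. emeasure (M i) (X i))"
    using inj by (simp add: prod.reindex inj_on_subset flip: image_vimage_eq)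
  also have "\<dots> = (\<Prod>i\<in>J. emeasure (M i) (X i))"
  proof -
    have "J = (J \<inter> range a) \<union> (J \<inter> range b)" using cover by blast
    moreover have "(J \<inter> range a) \<inter> (J \<inter> range b) = {}" using ranges_disjoint by blast
    ultimately show ?thesis using J(1) by (metis finite_Int prod.union_disjoint)
  qed
  also have "\<dots> = emeasure (PiM UNIV M) (prod_emb UNIV M J (PiE J X))"
    using M J X by (simp add: emeasure_PiM_emb)
  finally show "emeasure (PiM UNIV M) (prod_emb UNIV M J (PiE J X)) =
      emeasure (distr (?A \<Otimes>\<^sub>M ?B) (PiM UNIV M) glue) (prod_emb UNIV M J (PiE J X))" ..
qed

definition bern :: "(nat \<Rightarrow> real) \<Rightarrow> nat \<Rightarrow> bool measure" where
  "bern p i = measure_pmf (bernoulli_pmf (1 - p i))"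

definition step_space :: "(nat \<Rightarrow> real) \<Rightarrow> (nat \<Rightarrow> bool) measure" where
  "step_space p = PiM UNIV (bern p)"

lemma erasure_space_PiM: "erasure_space p = PiM UNIV (\<lambda>j. bern p (snd j))"
  by (simp add: erasure_space_def bern_def split_beta')

lemma prob_space_bern: "prob_space (bern p i)"
  by (simp add: bern_def prob_space_measure_pmf)

lemma prob_space_erasure_space: "prob_space (erasure_space p)"
  unfolding erasure_space_PiM by (intro prob_space_PiM prob_space_bern)

lemma erasure_measurable [measurable]:
  "(\<lambda>\<omega>. \<omega> j) \<in> measurable (erasure_space p) (count_space UNIV)"
proof -
  have "(\<lambda>\<omega>. \<omega> j) \<in> measurable (erasure_space p) (bern p (snd j))"
    unfolding erasure_space_PiM by (rule measurable_component_singleton) simp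
  then show ?thesis by (simp add: bern_def)
qed

definition insert_step :: "(nat \<Rightarrow> bool) \<times> (nat \<times> nat \<Rightarrow> bool) \<Rightarrow> nat \<times> nat \<Rightarrow> bool" where
  "insert_step = (\<lambda>(x, \<omega>) (t, i). if t = 1 then x i else if t = 0 then \<omega> (0, i) else \<omega> (t - 1, i))"

definition later_step :: "nat \<times> nat \<Rightarrow> nat \<times> nat" where
  "later_step k = (if fst k = 0 then k else (Suc (fst k), snd k))"

lemma snd_later_step: "snd (later_step k) = snd k"
  by (simp add: later_step_def)

lemma insert_step_product:
  shows insert_step_measurable:
      "insert_step \<in> measurable (step_space p \<Otimes>\<^sub>M erasure_space p) (erasure_space p)"
    and erasure_space_insert_step:
      "distr (step_space p \<Otimes>\<^sub>M erasure_space p) (erasure_space p) insert_step = erasure_space p"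
proof -
  have cover: "j \<in> range (Pair 1) \<union> range later_step" for j :: "nat \<times> nat"
  proof (cases "fst j \<le> 1")
    case True
    then show ?thesis by (cases j) (auto simp: later_step_def le_Suc_eq)
  next
    case False
    then have "j = later_step (fst j - 1, snd j)" by (simp add: later_step_def)
    then show ?thesis by blast
  qed
  have glue_1: "insert_step (x, \<omega>) (1, i) = x i"
    and glue_later: "insert_step (x, \<omega>) (later_step k) = \<omega> k" for x \<omega> i k
    by (auto simp: insert_step_def later_step_def split: prod.split)
  have factors: "PiM UNIV (\<lambda>i. bern p (snd (1::nat, i))) = step_space p"
    "PiM UNIV (\<lambda>k. bern p (snd (later_step k))) = erasure_space p"
    by (simp_all add: step_space_def erasure_space_PiM snd_later_step)
  show "insert_step \<in> measurable (step_space p \<Otimes>\<^sub>M erasure_space p) (erasure_space p)"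
    using measurable_PiM_glue[OF cover glue_1 glue_later, of "\<lambda>j. bern p (snd j)"]
    by (simp only: factors flip: erasure_space_PiM)
  have "distr (PiM UNIV (\<lambda>i. bern p (snd (1::nat, i))) \<Otimes>\<^sub>M PiM UNIV (\<lambda>k. bern p (snd (later_step k))))
      (PiM UNIV (\<lambda>j. bern p (snd j))) insert_step = PiM UNIV (\<lambda>j. bern p (snd j))"
    by (rule distr_PiM_glue[OF prob_space_bern _ _ _ cover glue_1 glue_later])
      (auto simp: inj_def later_step_def prod_eq_iff)
  then show "distr (step_space p \<Otimes>\<^sub>M erasure_space p) (erasure_space p) insert_step = erasure_space p"
    by (simp only: factors flip: erasure_space_PiM)
qed

lemma nn_integral_step_space:
  assumes "0 \<le> p 1" "p 1 \<le> 1"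
  shows "(\<integral>\<^sup>+x. (if x 1 then a else b) \<partial>step_space p) = ennreal (1 - p 1) * a + ennreal (p 1) * b"
proof -
  have component: "distr (step_space p) (bern p 1) (\<lambda>x. x 1) = bern p 1"
    unfolding step_space_def by (rule distr_PiM_component) (simp_all add: prob_space_bern)
  have "(\<lambda>x. x 1) \<in> measurable (step_space p) (bern p 1)"
    unfolding step_space_def by (rule measurable_component_singleton) simp
  then have "(\<integral>\<^sup>+y. (if y then a else b) \<partial>distr (step_space p) (bern p 1) (\<lambda>x. x 1))
      = (\<integral>\<^sup>+x. (if x 1 then a else b) \<partial>step_space p)"
    by (rule nn_integral_distr) (simp add: bern_def)
  then have "(\<integral>\<^sup>+x. (if x 1 then a else b) \<partial>step_space p) = (\<integral>\<^sup>+y. (if y then a else b) \<partial>bern p 1)"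
    by (simp only: component)
  also have "\<dots> = ennreal (1 - p 1) * a + ennreal (p 1) * b"
    using assms by (simp add: bern_def nn_integral_measure_pmf_support[of UNIV] UNIV_bool mult.commute)
  finally show ?thesis .
qed

lemma nn_integral_first_step:
  assumes f: "f \<in> borel_measurable (erasure_space p)"
    and F: "F \<in> borel_measurable (erasure_space p)" and G: "G \<in> borel_measurable (erasure_space p)"
    and step: "\<And>x \<omega>. f (insert_step (x, \<omega>)) = (if x 1 then F \<omega> else G \<omega>)"
    and p: "0 \<le> p 1" "p 1 \<le> 1"
  shows "(\<integral>\<^sup>+\<omega>. f \<omega> \<partial>erasure_space p) =
    ennreal (1 - p 1) * (\<integral>\<^sup>+\<omega>. F \<omega> \<partial>erasure_space p) + ennreal (p 1) * (\<integral>\<^sup>+\<omega>. G \<omega> \<partial>erasure_space p)"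
proof -
  interpret E: prob_space "erasure_space p" by (rule prob_space_erasure_space)
  have "(\<integral>\<^sup>+\<omega>. f \<omega> \<partial>erasure_space p)
      = (\<integral>\<^sup>+\<omega>. f \<omega> \<partial>distr (step_space p \<Otimes>\<^sub>M erasure_space p) (erasure_space p) insert_step)"
    by (simp only: erasure_space_insert_step)
  also have "\<dots> = (\<integral>\<^sup>+x\<omega>. f (insert_step x\<omega>) \<partial>(step_space p \<Otimes>\<^sub>M erasure_space p))"
    using f by (intro nn_integral_distr insert_step_measurable) simp
  also have "\<dots> = (\<integral>\<^sup>+x. \<integral>\<^sup>+\<omega>. f (insert_step (x, \<omega>)) \<partial>erasure_space p \<partial>step_space p)"
    using f by (intro E.nn_integral_fst[symmetric] measurable_compose[OF insert_step_measurable])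
  also have "\<dots> = (\<integral>\<^sup>+x. (if x 1 then (\<integral>\<^sup>+\<omega>. F \<omega> \<partial>erasure_space p) else (\<integral>\<^sup>+\<omega>. G \<omega> \<partial>erasure_space p)) \<partial>step_space p)"
    by (intro nn_integral_cong) (simp add: step)
  also have "\<dots> = ennreal (1 - p 1) * (\<integral>\<^sup>+\<omega>. F \<omega> \<partial>erasure_space p) + ennreal (p 1) * (\<integral>\<^sup>+\<omega>. G \<omega> \<partial>erasure_space p)"
    using p by (rule nn_integral_step_space)
  finally show ?thesis .
qed

lemma successes_measurable [measurable]:
  "(\<lambda>\<omega>. successes (curry \<omega>) t) \<in> measurable (erasure_space p) (count_space UNIV)"
proof (induction t)
  case (Suc t)
  note Suc [measurable]
  have eq: "(\<lambda>\<omega>. successes (curry \<omega>) (Suc t))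
      = (\<lambda>\<omega>. successes (curry \<omega>) t + (if \<omega> (Suc t, 1) then 1 else 0))"
    by (rule ext) (simp only: successes.simps curry_conv)
  show ?case unfolding eq by measurable
qed simp

lemma rho_measurable [measurable]:
  "(\<lambda>\<omega>. rho n (curry \<omega>) t i) \<in> measurable (erasure_space p) (count_space UNIV)"
proof (induction t arbitrary: i)
  case (Suc t)
  note Suc [measurable]
  have eq: "(\<lambda>\<omega>. rho n (curry \<omega>) (Suc t) i) = (\<lambda>\<omega>. if i \<le> 1 then n else rho n (curry \<omega>) t i +
      (if \<omega> (Suc t, i - 1) \<and> rho n (curry \<omega>) t (i - 1) > rho n (curry \<omega>) t i then 1 else 0))"
    by (rule ext) (simp only: rho.simps curry_conv)
  show ?case unfolding eq by measurable
qed simp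

lemma hit_measurable:
  assumes P: "\<And>t. (\<lambda>\<omega>. P t \<omega>) \<in> measurable M (count_space UNIV)"
  shows "(\<lambda>\<omega>. hit (\<lambda>t. P t \<omega>)) \<in> borel_measurable M"
  unfolding hit_def
proof (rule measurable_If)
  show "(\<lambda>\<omega>. of_nat (LEAST t. P t \<omega>) :: ennreal) \<in> borel_measurable M"
    by (rule measurable_compose[OF measurable_Least[OF P]]) simp
  show "{\<omega> \<in> space M. \<exists>t. P t \<omega>} \<in> sets M"
    using P by (intro sets.sets_Collect_countable_Ex) (simp add: pred_def[symmetric])
qed simp

lemma first_link_time_measurable [measurable]:
  "(\<lambda>\<omega>. first_link_time n (curry \<omega>)) \<in> borel_measurable (erasure_space p)"
  unfolding first_link_time_successes by (rule hit_measurable) measurable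

lemma completion_time_measurable [measurable]:
  "(\<lambda>\<omega>. completion_time l n (curry \<omega>)) \<in> borel_measurable (erasure_space p)"
  unfolding completion_time_def by (rule hit_measurable) measurable

lemma first_success_measurable [measurable]:
  "(\<lambda>\<omega>. first_success (curry \<omega>)) \<in> measurable (erasure_space p) (count_space UNIV)"
  unfolding first_success_def by (rule measurable_Least) measurable

definition shift_steps :: "nat \<Rightarrow> (nat \<times> nat \<Rightarrow> bool) \<Rightarrow> nat \<times> nat \<Rightarrow> bool" where
  "shift_steps k \<omega> = (\<lambda>(t, i). if t = 0 then \<omega> (0, i) else \<omega> (t + k, i))"

lemma curry_shift_steps: "curry (shift_steps k \<omega>) = shift_time k (curry \<omega>)"
  by (simp add: fun_eq_iff shift_steps_def shift_time_def)

lemma shift_steps_0 [simp]: "shift_steps 0 \<omega> = \<omega>"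
  by (simp add: fun_eq_iff shift_steps_def)

lemma shift_steps_insert_step: "shift_steps (Suc k) (insert_step (x, \<omega>)) = shift_steps k \<omega>"
  by (simp add: fun_eq_iff shift_steps_def insert_step_def)

lemma shift_steps_measurable:
  "shift_steps k \<in> measurable (erasure_space p) (erasure_space p)"
proof -
  have "(\<lambda>\<omega>. shift_steps k \<omega> j) \<in> measurable (erasure_space p) (bern p (snd j))" for j
    by (cases j) (simp add: shift_steps_def bern_def)
  then have "(\<lambda>\<omega> j. shift_steps k \<omega> j) \<in> measurable (erasure_space p) (PiM UNIV (\<lambda>j. bern p (snd j)))"
    by (intro measurable_PiM_single') (auto simp: bern_def)
  then show ?thesis by (simp add: erasure_space_PiM)
qed

lemma successes_insert_step:
  "successes (curry (insert_step (x, \<omega>))) (Suc t) = (if x 1 then 1 else 0) + successes (curry \<omega>) t"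
  by (induction t) (simp_all add: insert_step_def)

lemma first_success_insert_step:
  assumes "\<not> x 1 \<Longrightarrow> \<exists>t. 1 \<le> successes (curry \<omega>) t"
  shows "first_success (curry (insert_step (x, \<omega>))) = (if x 1 then 1 else Suc (first_success (curry \<omega>)))"
proof (cases "x 1")
  case True
  have "(LEAST t. 1 \<le> successes (curry (insert_step (x, \<omega>))) t) = 1"
  proof (rule Least_equality)
    show "1 \<le> successes (curry (insert_step (x, \<omega>))) 1"
      using True successes_insert_step[of x \<omega> 0] by simp
    fix t assume "1 \<le> successes (curry (insert_step (x, \<omega>))) t"
    then show "1 \<le> t" by (cases t) auto
  qed
  then show ?thesis using True by (simp add: first_success_def)
next
  case False
  then obtain t where "1 \<le> successes (curry \<omega>) t" using assms by blast
  then show ?thesis unfolding first_success_def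
    using False by (subst Least_Suc[where n = "Suc t"]) (simp_all add: successes_insert_step del: successes.simps(2))
qed

definition restart :: "((nat \<times> nat \<Rightarrow> bool) \<Rightarrow> ennreal) \<Rightarrow> (nat \<times> nat \<Rightarrow> bool) \<Rightarrow> ennreal" where
  "restart g \<omega> = (if \<exists>t. 1 \<le> successes (curry \<omega>) t
     then g (shift_steps (first_success (curry \<omega>)) \<omega>) else 0)"

definition restart_by :: "nat \<Rightarrow> ((nat \<times> nat \<Rightarrow> bool) \<Rightarrow> ennreal) \<Rightarrow> (nat \<times> nat \<Rightarrow> bool) \<Rightarrow> ennreal" where
  "restart_by K g \<omega> = (if 1 \<le> successes (curry \<omega>) K
     then g (shift_steps (first_success (curry \<omega>)) \<omega>) else 0)"

lemma restart_by_insert_step: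
  "restart_by (Suc K) g (insert_step (x, \<omega>)) = (if x 1 then g \<omega> else restart_by K g \<omega>)"
proof -
  have "first_success (curry (insert_step (x, \<omega>))) = (if x 1 then 1 else Suc (first_success (curry \<omega>)))"
    if "\<not> x 1 \<longrightarrow> 1 \<le> successes (curry \<omega>) K"
    using that by (intro first_success_insert_step) blast
  then show ?thesis
    by (auto simp: restart_by_def successes_insert_step shift_steps_insert_step simp del: successes.simps(2))
qed

lemma shifted_measurable:
  assumes "g \<in> borel_measurable (erasure_space p)"
  shows "(\<lambda>\<omega>. g (shift_steps (first_success (curry \<omega>)) \<omega>)) \<in> borel_measurable (erasure_space p)"
proof (rule measurable_compose_countable[where f = "\<lambda>k \<omega>. g (shift_steps k \<omega>)"])
  show "(\<lambda>\<omega>. g (shift_steps k \<omega>)) \<in> borel_measurable (erasure_space p)" for k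
    using shift_steps_measurable assms by (rule measurable_compose)
qed measurable

lemma restart_measurable:
  assumes "g \<in> borel_measurable (erasure_space p)"
  shows "restart g \<in> borel_measurable (erasure_space p)"
    and "restart_by K g \<in> borel_measurable (erasure_space p)"
  unfolding restart_def[abs_def] restart_by_def[abs_def]
  by (rule measurable_If[OF shifted_measurable[OF assms]]; measurable)+

(* The first success happens by time K with probability 1 - p_1^K, independently of what
   follows it. *)
lemma nn_integral_restart_by:
  assumes g: "g \<in> borel_measurable (erasure_space p)" and p: "0 \<le> p 1" "p 1 \<le> 1"
  shows "(\<integral>\<^sup>+\<omega>. restart_by K g \<omega> \<partial>erasure_space p) = ennreal (1 - p 1 ^ K) * (\<integral>\<^sup>+\<omega>. g \<omega> \<partial>erasure_space p)"
proof (induction K)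
  case 0
  then show ?case by (simp add: restart_by_def)
next
  case (Suc K)
  let ?G = "\<integral>\<^sup>+\<omega>. g \<omega> \<partial>erasure_space p"
  have "(\<integral>\<^sup>+\<omega>. restart_by (Suc K) g \<omega> \<partial>erasure_space p)
      = ennreal (1 - p 1) * ?G + ennreal (p 1) * (ennreal (1 - p 1 ^ K) * ?G)"
    unfolding Suc.IH[symmetric] using p
    by (intro nn_integral_first_step restart_measurable g restart_by_insert_step)
  also have "\<dots> = ennreal (1 - p 1 + p 1 * (1 - p 1 ^ K)) * ?G"
    using p by (simp add: distrib_right ennreal_mult mult.assoc power_le_one ennreal_plus)
  also have "1 - p 1 + p 1 * (1 - p 1 ^ K) = 1 - p 1 ^ Suc K"
    by (simp add: algebra_simps)
  finally show ?case .
qed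

lemma nn_integral_restart:
  assumes g: "g \<in> borel_measurable (erasure_space p)" and p: "0 \<le> p 1" "p 1 < 1"
  shows "(\<integral>\<^sup>+\<omega>. restart g \<omega> \<partial>erasure_space p) = (\<integral>\<^sup>+\<omega>. g \<omega> \<partial>erasure_space p)"
proof -
  have restart_SUP: "restart g \<omega> = (SUP K. restart_by K g \<omega>)" for \<omega>
  proof (cases "\<exists>t. 1 \<le> successes (curry \<omega>) t")
    case True
    then obtain t where "1 \<le> successes (curry \<omega>) t" by blast
    then have "restart g \<omega> = restart_by t g \<omega>"
      by (auto simp: restart_def restart_by_def)
    moreover have "restart_by K g \<omega> \<le> restart g \<omega>" for K
      by (auto simp: restart_def restart_by_def)
    ultimately show ?thesis
      by (intro antisym SUP_upper2[where i = t] SUP_least) auto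
  qed (simp add: restart_def restart_by_def)
  have "incseq (\<lambda>K. restart_by K g)"
    by (intro incseq_SucI le_funI) (auto simp: restart_by_def)
  then have "(\<integral>\<^sup>+\<omega>. restart g \<omega> \<partial>erasure_space p) = (SUP K. \<integral>\<^sup>+\<omega>. restart_by K g \<omega> \<partial>erasure_space p)"
    unfolding restart_SUP by (intro nn_integral_monotone_convergence_SUP restart_measurable g)
  also have "\<dots> = (SUP K. ennreal (1 - p 1 ^ K)) * (\<integral>\<^sup>+\<omega>. g \<omega> \<partial>erasure_space p)"
    using p by (simp add: nn_integral_restart_by g SUP_mult_right_ennreal)
  also have "(SUP K. ennreal (1 - p 1 ^ K)) = 1"
  proof (rule LIMSEQ_unique[OF LIMSEQ_SUP])
    show "incseq (\<lambda>K. ennreal (1 - p 1 ^ K))"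
      using p by (intro incseq_SucI ennreal_leI) (simp add: power_decreasing mult_left_le_one_le)
    have "(\<lambda>K. 1 - p 1 ^ K) \<longlonglongrightarrow> 1 - 0"
      using p by (intro tendsto_diff tendsto_const LIMSEQ_power_zero) auto
    from tendsto_ennrealI[OF this] show "(\<lambda>K. ennreal (1 - p 1 ^ K)) \<longlonglongrightarrow> 1" by simp
  qed
  finally show ?thesis by simp
qed

lemma prob_no_success:
  assumes "0 \<le> p 1" "p 1 \<le> 1"
  shows "(\<integral>\<^sup>+\<omega>. (if 1 \<le> successes (curry \<omega>) k then 0 else 1) \<partial>erasure_space p) = ennreal (p 1 ^ k)"
proof (induction k)
  case 0
  interpret prob_space "erasure_space p" by (rule prob_space_erasure_space)
  show ?case using emeasure_space_1 by simp
next
  case (Suc k)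
  have "(\<integral>\<^sup>+\<omega>. (if 1 \<le> successes (curry \<omega>) (Suc k) then 0 else 1) \<partial>erasure_space p)
      = ennreal (1 - p 1) * (\<integral>\<^sup>+\<omega>. 0 \<partial>erasure_space p) + ennreal (p 1) * ennreal (p 1 ^ k)"
    unfolding Suc.IH[symmetric] using assms
    by (intro nn_integral_first_step) (simp_all add: successes_insert_step del: successes.simps(2))
  also have "\<dots> = ennreal (p 1 ^ Suc k)"
    using assms by (simp add: ennreal_mult)
  finally show ?case .
qed

lemma expected_first_success:
  assumes "0 \<le> p 1" "p 1 < 1"
  shows "(\<integral>\<^sup>+\<omega>. first_link_time 1 (curry \<omega>) \<partial>erasure_space p) = ennreal (1 / (1 - p 1))"
proof -
  have "first_link_time 1 (curry \<omega>) = (\<Sum>k. if 1 \<le> successes (curry \<omega>) k then 0 else 1)" for \<omega>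
    unfolding first_link_time_successes by (rule hit_tail_sum) simp
  then have "(\<integral>\<^sup>+\<omega>. first_link_time 1 (curry \<omega>) \<partial>erasure_space p)
      = (\<Sum>k. \<integral>\<^sup>+\<omega>. (if 1 \<le> successes (curry \<omega>) k then 0 else 1) \<partial>erasure_space p)"
    by (simp add: nn_integral_suminf)
  also have "\<dots> = (\<Sum>k. ennreal (p 1 ^ k))"
    using assms by (simp only: prob_no_success)
  also have "\<dots> = ennreal (1 / (1 - p 1))"
    using assms by (simp add: suminf_ennreal2 summable_geometric suminf_geometric)
  finally show ?thesis .
qed

lemma first_link_time_Suc:
  "first_link_time (Suc m) (curry \<omega>)
    = first_link_time 1 (curry \<omega>) + restart (\<lambda>\<omega>. first_link_time m (curry \<omega>)) \<omega>"
proof (cases "\<exists>t. 1 \<le> successes (curry \<omega>) t")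
  case True
  have "first_link_time 1 (curry \<omega>) = of_nat (first_success (curry \<omega>))"
    using True by (simp add: first_link_time_successes hit_def first_success_def)
  with True show ?thesis
    by (simp add: first_link_time_restart restart_def curry_shift_steps)
next
  case False
  then have "successes (curry \<omega>) t = 0" for t by (simp add: not_le)
  with False show ?thesis by (simp add: first_link_time_successes restart_def hit_def)
qed

lemma expected_first_link_time:
  assumes "0 \<le> p 1" "p 1 < 1"
  shows "(\<integral>\<^sup>+\<omega>. first_link_time m (curry \<omega>) \<partial>erasure_space p) = ennreal (m / (1 - p 1))"
proof (induction m)
  case 0
  have "first_link_time 0 z = 0" for z by (simp add: first_link_time_successes hit_def)
  then show ?case by simp
next
  case (Suc m)
  have "(\<integral>\<^sup>+\<omega>. first_link_time (Suc m) (curry \<omega>) \<partial>erasure_space p)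
      = (\<integral>\<^sup>+\<omega>. first_link_time 1 (curry \<omega>) \<partial>erasure_space p)
        + (\<integral>\<^sup>+\<omega>. restart (\<lambda>\<omega>. first_link_time m (curry \<omega>)) \<omega> \<partial>erasure_space p)"
    unfolding first_link_time_Suc
    by (intro nn_integral_add restart_measurable first_link_time_measurable)
  also have "\<dots> = ennreal (1 / (1 - p 1)) + ennreal (m / (1 - p 1))"
    using assms by (simp only: expected_first_success nn_integral_restart first_link_time_measurable Suc.IH)
  also have "\<dots> = ennreal (Suc m / (1 - p 1))"
    using assms by (simp add: ennreal_plus[symmetric] add_divide_distrib del: ennreal_plus)
  finally show ?case .
qed

lemma expected_delay_mono:
  assumes "1 \<le> l" "0 \<le> p 1" "p 1 < 1"
  shows "(\<integral>\<^sup>+\<omega>. completion_time l n (curry \<omega>) - first_link_time n (curry \<omega>) \<partial>erasure_space p)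
    \<le> (\<integral>\<^sup>+\<omega>. completion_time l (Suc n) (curry \<omega>) - first_link_time (Suc n) (curry \<omega>) \<partial>erasure_space p)"
proof -
  define delay where "delay m \<omega> = completion_time l m (curry \<omega>) - first_link_time m (curry \<omega>)" for m \<omega>
  have "restart (delay n) \<omega> \<le> delay (Suc n) \<omega>" for \<omega>
    using delay_restart[OF assms(1)]
    by (simp add: restart_def delay_def curry_shift_steps)
  then have "(\<integral>\<^sup>+\<omega>. restart (delay n) \<omega> \<partial>erasure_space p) \<le> (\<integral>\<^sup>+\<omega>. delay (Suc n) \<omega> \<partial>erasure_space p)"
    by (intro nn_integral_mono)
  moreover have "(\<integral>\<^sup>+\<omega>. restart (delay n) \<omega> \<partial>erasure_space p) = (\<integral>\<^sup>+\<omega>. delay n \<omega> \<partial>erasure_space p)"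
    using assms(2,3) unfolding delay_def[abs_def] by (intro nn_integral_restart) measurable
  ultimately show ?thesis by (simp add: delay_def)
qed

theorem mainTheorem4:
  fixes l n :: nat and p :: "nat \<Rightarrow> real"
  assumes "l \<ge> 1" and "n \<ge> 1"
    and "\<And>i. i \<in> {1..l} \<Longrightarrow> 0 \<le> p i \<and> p i < 1"
  shows "(\<integral>\<^sup>+ \<omega>. first_link_time n (curry \<omega>) \<partial>erasure_space p) = ennreal (n / (1 - p 1))
     \<and> (\<integral>\<^sup>+ \<omega>. completion_time l n (curry \<omega>) - first_link_time n (curry \<omega>) \<partial>erasure_space p)
         \<le> (\<integral>\<^sup>+ \<omega>. completion_time l (n + 1) (curry \<omega>) - first_link_time (n + 1) (curry \<omega>) \<partial>erasure_space p)"
proof -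
  have p: "0 \<le> p 1" "p 1 < 1" using assms(1) assms(3)[of 1] by auto
  show ?thesis
    using expected_first_link_time[where p = p, OF p] expected_delay_mono[where p = p, OF assms(1) p]
    by simp
qed

end
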